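(* Assume $\mu_1>\mu_a$ for all $a\in\{2,\dots,K\}$ and $c_1,\dots,c_K>0$. The optimal proportion $\boldsymbol{w}^*=(w_1^*,\dots,w_K^* )$ is given by \[ w_a^*=\frac{c_a\,x_a(y^* )}{c_1+c_2x_2(y^* )+\cdots+c_Kx_K(y^* )},\qquad a\in\{1,\dots,K\}, \] with the convention $x_1(y)\equiv1$, where $y^*$ is the unique solution of $F_{\boldsymbol{\mu},\boldsymbol{c}}(y)=1$ for \[ F_{\boldsymbol{\mu},\boldsymbol{c}}(y)=\sum_{a=2}^K\frac{c_a\,d\!\left(\mu_1,\frac{\mu_1+x_a(y)\mu_a}{1+x_a(y)}\right)}{c_1\,d\!\left(\mu_a,\frac{\mu_1+x_a(y)\mu_a}{1+x_a(y)}\right)}. \]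
   Context: Rewards belong to a one-parameter natural exponential family parametrized by the mean; $d(\mu,\mu')$ is the KL divergence between members with means $\mu,\mu'$. $\Sigma_K$ is the probability simplex. $\boldsymbol{w}^*$ is the maximizer over $\boldsymbol{w}\in\Sigma_K$ of $\inf_{\boldsymbol{\lambda}:a^*(\boldsymbol{\lambda})\neq1}\sum_a\frac{w_a}{c_a}d(\mu_a,\lambda_a)$, where $\boldsymbol\lambda$ ranges over mean vectors of the family whose unique best arm is not arm $1$. For $\alpha\in[0,1]$, $I_\alpha(x,y)=\alpha d(x,\alpha x+(1-\alpha)y)+(1-\alpha)d(y,\alpha x+(1-\alpha)y)$; for $a\ge2$, $g_a(x)=(1+x)I_{1/(1+x)}(\mu_1,\mu_a)$, a strictly increasing bijection $[0,\infty)\to[0,d(\mu_1,\mu_a))$, and $x_a=g_a^{-1}:[0,d(\mu_1,\mu_a))\to[0,\infty)$. *)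

theory Defs
  imports "HOL-Analysis.Analysis"
begin

text \<open>One-parameter natural exponential family, described through its cumulant
  (log-partition) function b on the open natural-parameter interval Theta,
  with first derivative b' (the mean map) and positive second derivative
  (the variance). The means form the set b' ` Theta.\<close>

definition nef_cumulant :: "real set \<Rightarrow> (real \<Rightarrow> real) \<Rightarrow> (real \<Rightarrow> real) \<Rightarrow> bool" where
  "nef_cumulant Theta b b' \<longleftrightarrow>
     open Theta \<and> is_interval Theta \<and> Theta \<noteq> {} \<and>
     (\<forall>\<theta>\<in>Theta. (b has_real_derivative b' \<theta>) (at \<theta>)) \<and>
     (\<forall>\<theta>\<in>Theta. \<exists>v. (b' has_real_derivative v) (at \<theta>) \<and> v > 0)"

definition natpar :: "real set \<Rightarrow> (real \<Rightarrow> real) \<Rightarrow> real \<Rightarrow> real" where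
  "natpar Theta b' m = (THE \<theta>. \<theta> \<in> Theta \<and> b' \<theta> = m)"

definition nef_kl :: "real set \<Rightarrow> (real \<Rightarrow> real) \<Rightarrow> (real \<Rightarrow> real) \<Rightarrow> real \<Rightarrow> real \<Rightarrow> real" where
  "nef_kl Theta b b' m m' =
     b (natpar Theta b' m') - b (natpar Theta b' m) - (natpar Theta b' m' - natpar Theta b' m) * m"

definition I_alpha :: "(real \<Rightarrow> real \<Rightarrow> real) \<Rightarrow> real \<Rightarrow> real \<Rightarrow> real \<Rightarrow> real" where
  "I_alpha d \<alpha> x y = \<alpha> * d x (\<alpha> * x + (1 - \<alpha>) * y) + (1 - \<alpha>) * d y (\<alpha> * x + (1 - \<alpha>) * y)"

definition g_fun :: "(real \<Rightarrow> real \<Rightarrow> real) \<Rightarrow> real \<Rightarrow> real \<Rightarrow> real \<Rightarrow> real" where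
  "g_fun d m1 ma x = (1 + x) * I_alpha d (1 / (1 + x)) m1 ma"

text \<open>x_a = inverse of g_a (defined on [0, d(mu_1, mu_a))).\<close>
definition x_fun :: "(real \<Rightarrow> real \<Rightarrow> real) \<Rightarrow> real \<Rightarrow> real \<Rightarrow> real \<Rightarrow> real" where
  "x_fun d m1 ma y = (THE x. 0 \<le> x \<and> g_fun d m1 ma x = y)"

definition x_arm :: "(real \<Rightarrow> real \<Rightarrow> real) \<Rightarrow> (nat \<Rightarrow> real) \<Rightarrow> nat \<Rightarrow> real \<Rightarrow> real" where
  "x_arm d \<mu> a y = (if a = 1 then 1 else x_fun d (\<mu> 1) (\<mu> a) y)"

definition F_fun :: "(real \<Rightarrow> real \<Rightarrow> real) \<Rightarrow> nat \<Rightarrow> (nat \<Rightarrow> real) \<Rightarrow> (nat \<Rightarrow> real) \<Rightarrow> real \<Rightarrow> real" where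
  "F_fun d K \<mu> c y =
     (\<Sum>a=2..K. let xa = x_fun d (\<mu> 1) (\<mu> a) y; m = (\<mu> 1 + xa * \<mu> a) / (1 + xa)
                in (c a * d (\<mu> 1) m) / (c 1 * d (\<mu> a) m))"

definition opt_weights :: "(real \<Rightarrow> real \<Rightarrow> real) \<Rightarrow> nat \<Rightarrow> (nat \<Rightarrow> real) \<Rightarrow> (nat \<Rightarrow> real) \<Rightarrow> real \<Rightarrow> nat \<Rightarrow> real" where
  "opt_weights d K \<mu> c y a =
     c a * x_arm d \<mu> a y / (\<Sum>b=1..K. c b * x_arm d \<mu> b y)"

definition prob_simplex :: "nat \<Rightarrow> (nat \<Rightarrow> real) set" where
  "prob_simplex K = {w. (\<forall>a\<in>{1..K}. 0 \<le> w a) \<and> (\<Sum>a=1..K. w a) = 1}"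

definition alt_set :: "real set \<Rightarrow> nat \<Rightarrow> (nat \<Rightarrow> real) set" where
  "alt_set M K = {l. (\<forall>a\<in>{1..K}. l a \<in> M) \<and>
                     (\<exists>a\<in>{2..K}. \<forall>b\<in>{1..K}. b \<noteq> a \<longrightarrow> l b < l a)}"

definition objective :: "(real \<Rightarrow> real \<Rightarrow> real) \<Rightarrow> real set \<Rightarrow> nat \<Rightarrow> (nat \<Rightarrow> real) \<Rightarrow> (nat \<Rightarrow> real)
    \<Rightarrow> (nat \<Rightarrow> real) \<Rightarrow> real" where
  "objective d M K \<mu> c w = Inf ((\<lambda>l. \<Sum>a=1..K. w a / c a * d (\<mu> a) (l a)) ` alt_set M K)"

end

theory Submission
  imports Defs
begin

text \<open>
  The KL divergence d of a natural exponential family is the Bregman divergence of the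
  cumulant. Hence for x \<ge> 0 the value g_a(x) is the minimum of d(mu_1, m) + x d(mu_a, m)
  over all means m, attained exactly at m = (mu_1 + x mu_a) / (1 + x), while the objective
  of w is the infimum over a \<ge> 2 and m of the two-arm cost
  (w_1/c_1) d(mu_1, m) + (w_a/c_a) d(mu_a, m). For y with F(y) = 1 let m_a be the minimiser
  belonging to x_a(y). The proposed weights make every two-arm cost at m_a equal to
  y / (c_1 + c_2 x_2(y) + ... + c_K x_K(y)) and this is their objective. For any weights w,
  the two-arm costs at the m_a weighted by c_a / d(mu_a, m_a) add up to
  w_1 F(y) + w_2 + ... + w_K = 1, just as for the proposed weights, so their minimum, and
  with it the objective of w, is no larger; in case of equality every two-arm cost of w
  is minimised at m_a, which fixes w_a / w_1. A solution of F(y) = 1 exists by the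
  intermediate value theorem, and it is unique because it can be read off the unique
  optimal weights.
\<close>

locale nef_family =
  fixes Theta :: "real set" and b b' :: "real \<Rightarrow> real"
  assumes nef_cumulant: "nef_cumulant Theta b b'"
begin

abbreviation "kl \<equiv> nef_kl Theta b b'"
abbreviation "Means \<equiv> b' ` Theta"
abbreviation "param \<equiv> natpar Theta b'"

lemma open_Theta: "open Theta"
  and is_interval_Theta: "is_interval Theta"
  and b_deriv: "\<theta> \<in> Theta \<Longrightarrow> (b has_real_derivative b' \<theta>) (at \<theta>)"
  and b'_deriv_pos: "\<theta> \<in> Theta \<Longrightarrow> \<exists>v. (b' has_real_derivative v) (at \<theta>) \<and> v > 0"
  using nef_cumulant unfolding nef_cumulant_def by auto

lemma Theta_between: "s \<in> Theta \<Longrightarrow> u \<in> Theta \<Longrightarrow> s \<le> t \<Longrightarrow> t \<le> u \<Longrightarrow> t \<in> Theta"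
  using is_interval_Theta unfolding is_interval_1 by blast

lemma continuous_on_b': "continuous_on Theta b'"
  using b'_deriv_pos DERIV_isCont continuous_at_imp_continuous_on by blast

lemma mean_strict_mono: "strict_mono_on Theta b'"
proof (rule strict_mono_onI)
  fix s t assume assms: "s \<in> Theta" "t \<in> Theta" "s < t"
  obtain v where v: "\<And>\<theta>. \<theta> \<in> Theta \<Longrightarrow> (b' has_real_derivative v \<theta>) (at \<theta>) \<and> v \<theta> > 0"
    using b'_deriv_pos by metis
  obtain z where z: "s < z" "z < t" "b' t - b' s = (t - s) * v z"
    using MVT2[OF \<open>s < t\<close>, of b' v] v Theta_between assms by (metis less_imp_le)
  have "z \<in> Theta" using z assms Theta_between by (meson less_imp_le)
  with v z \<open>s < t\<close> show "b' s < b' t" by (smt (verit) mult_pos_pos)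
qed

lemma inj_on_mean: "inj_on b' Theta"
  using strict_mono_on_imp_inj_on[OF mean_strict_mono] .

lemma mean_less_iff: "s \<in> Theta \<Longrightarrow> t \<in> Theta \<Longrightarrow> b' s < b' t \<longleftrightarrow> s < t"
  using strict_mono_on_less[OF mean_strict_mono] .

lemma param_mean [simp]: "\<theta> \<in> Theta \<Longrightarrow> param (b' \<theta>) = \<theta>"
  unfolding natpar_def using inj_on_mean by (auto simp: inj_on_def)

lemma param_in_Theta: "m \<in> Means \<Longrightarrow> param m \<in> Theta"
  by auto

lemma param_mono: "m \<in> Means \<Longrightarrow> m' \<in> Means \<Longrightarrow> m \<le> m' \<Longrightarrow> param m \<le> param m'"
  by (auto simp: mean_less_iff[symmetric] not_less[symmetric])

lemma cumulant_above_tangent: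
  assumes "s \<in> Theta" "t \<in> Theta" "s \<noteq> t"
  shows "b t - b s - (t - s) * b' s > 0"
proof -
  have mvt: "\<exists>z. u < z \<and> z < u' \<and> z \<in> Theta \<and> b u' - b u = (u' - u) * b' z"
    if "u \<in> Theta" "u' \<in> Theta" "u < u'" for u u'
    using MVT2[OF \<open>u < u'\<close>, of b b'] b_deriv Theta_between that by (meson less_imp_le)
  show ?thesis
  proof (cases "s < t")
    case True
    then obtain z where z: "s < z" "z \<in> Theta" "b t - b s = (t - s) * b' z"
      using mvt assms by blast
    have "(t - s) * b' s < (t - s) * b' z"
      using True z assms strict_mono_onD[OF mean_strict_mono] by (intro mult_strict_left_mono) auto
    with z show ?thesis by linarith
  next
    case False
    then obtain z where z: "z < s" "z \<in> Theta" "b s - b t = (s - t) * b' z"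
      using mvt assms by force
    have "(s - t) * b' z < (s - t) * b' s"
      using False z assms strict_mono_onD[OF mean_strict_mono] by (intro mult_strict_left_mono) auto
    with z show ?thesis by (simp add: algebra_simps)
  qed
qed

lemma kl_self [simp]: "kl m m = 0"
  unfolding nef_kl_def by simp

lemma kl_pos: "m \<in> Means \<Longrightarrow> m' \<in> Means \<Longrightarrow> m \<noteq> m' \<Longrightarrow> kl m m' > 0"
  unfolding nef_kl_def using cumulant_above_tangent[of "param m" "param m'"] by force

lemma kl_nonneg: "m \<in> Means \<Longrightarrow> m' \<in> Means \<Longrightarrow> kl m m' \<ge> 0"
  using kl_pos[of m m'] by (cases "m = m'") auto

lemma kl_eq_0_iff: "m \<in> Means \<Longrightarrow> m' \<in> Means \<Longrightarrow> kl m m' = 0 \<longleftrightarrow> m = m'"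
  using kl_pos by fastforce

lemma kl_three_point: "kl x z = kl x y + kl y z + (param y - param z) * (x - y)"
  unfolding nef_kl_def by (simp add: algebra_simps)

lemma kl_mixture_decomposition:
  fixes p q u v z :: real
  assumes "p + q \<noteq> 0"
  defines "m \<equiv> (p * u + q * v) / (p + q)"
  shows "p * kl u z + q * kl v z = p * kl u m + q * kl v m + (p + q) * kl m z"
proof -
  have "p * kl u z + q * kl v z - (p * kl u m + q * kl v m + (p + q) * kl m z)
      = (param m - param z) * (p * u + q * v - (p + q) * m)"
    unfolding nef_kl_def by (simp add: algebra_simps)
  also have "\<dots> = 0" using assms by simp
  finally show ?thesis by simp
qed

lemma kl_le_between:
  assumes "x \<in> Means" "y \<in> Means" "z \<in> Means" "x \<le> y \<and> y \<le> z \<or> z \<le> y \<and> y \<le> x"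
  shows "kl x y \<le> kl x z"
proof -
  have "(param y - param z) * (x - y) \<ge> 0"
    using assms param_mono[of y z] param_mono[of z y]
    by (auto intro: mult_nonpos_nonpos mult_nonneg_nonneg)
  then show ?thesis using kl_three_point[of x z y] kl_nonneg[of y z] assms by linarith
qed

lemma common_mean_kl_le:
  assumes "m1 \<in> Means" "ma \<in> Means" "ma \<le> m1" "u \<in> Means" "v \<in> Means" "u < v"
  shows "\<exists>m\<in>Means. kl m1 m \<le> kl m1 u \<and> kl ma m \<le> kl ma v"
proof (cases "ma \<le> u")
  case True
  then show ?thesis using kl_le_between[of ma u v] assms by auto
next
  case False
  show ?thesis
  proof (cases "ma \<le> v")
    case True
    then show ?thesis
      using kl_le_between[of m1 ma u] kl_nonneg[of ma v] False assms by (intro bexI[of _ ma]) auto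
  next
    case False
    then show ?thesis using kl_le_between[of m1 v u] assms by (intro bexI[of _ v]) auto
  qed
qed

lemma Means_between: "x \<in> Means \<Longrightarrow> z \<in> Means \<Longrightarrow> x \<le> m \<Longrightarrow> m \<le> z \<Longrightarrow> m \<in> Means"
  using connected_continuous_image[OF continuous_on_b'] is_interval_connected[OF is_interval_Theta]
  by (metis connected_contains_Icc atLeastAtMost_iff subsetD)

lemma open_Means: "open Means"
  using invariance_of_domain[OF continuous_on_b' open_Theta inj_on_mean] .

lemma isCont_param:
  assumes "m \<in> Means"
  shows "isCont param m"
proof -
  obtain g where g: "homeomorphism Theta Means b' g"
    using injective_into_1d_eq_homeomorphism[OF continuous_on_b'] inj_on_mean
      is_interval_path_connected[OF is_interval_Theta] by blast
  then have "continuous_on Means param"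
    by (rule continuous_on_eq[OF homeomorphism_cont2]) (use g in \<open>auto simp: homeomorphism_def\<close>)
  then show ?thesis
    using assms open_Means continuous_on_eq_continuous_at by blast
qed

lemma isCont_kl: "m \<in> Means \<Longrightarrow> isCont (kl x) m"
  unfolding nef_kl_def
  using isCont_o2[OF isCont_param DERIV_isCont[OF b_deriv[OF param_in_Theta]]] isCont_param
  by (intro continuous_intros) auto

lemma continuous_on_kl: "continuous_on Means (kl x)"
  using isCont_kl continuous_at_imp_continuous_on by blast

end

definition mix :: "real \<Rightarrow> real \<Rightarrow> real \<Rightarrow> real" where
  "mix m1 ma x = (m1 + x * ma) / (1 + x)"

lemma mix_0 [simp]: "mix m1 ma 0 = m1"
  by (simp add: mix_def)

lemma mix_eq: "1 + x \<noteq> 0 \<Longrightarrow> mix m1 ma x = ma + (m1 - ma) / (1 + x)"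
  by (simp add: mix_def field_simps)

lemma mix_bounds:
  assumes "ma < m1" "0 \<le> x"
  shows "ma < mix m1 ma x" "mix m1 ma x \<le> m1"
proof -
  have "0 < (m1 - ma) / (1 + x)" "(m1 - ma) / (1 + x) \<le> m1 - ma"
    using assms by (simp_all add: divide_le_eq)
  then show "ma < mix m1 ma x" "mix m1 ma x \<le> m1"
    using assms by (simp_all add: mix_eq)
qed

lemma mix_strict_antimono: "ma < m1 \<Longrightarrow> 0 \<le> x \<Longrightarrow> x < x' \<Longrightarrow> mix m1 ma x' < mix m1 ma x"
  by (simp add: mix_eq divide_strict_left_mono)

lemma continuous_on_mix: "continuous_on {0..} (mix m1 ma)"
  unfolding mix_def by (intro continuous_intros) auto

lemma mix_tendsto: "(mix m1 ma \<longlongrightarrow> ma) at_top"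
proof -
  have "((\<lambda>x. ma + (m1 - ma) / (1 + x)) \<longlongrightarrow> ma + 0) at_top"
    by (intro tendsto_intros tendsto_divide_0[OF tendsto_const]
        filterlim_at_top_imp_at_infinity filterlim_tendsto_add_at_top[OF tendsto_const filterlim_ident])
  moreover have "eventually (\<lambda>x. ma + (m1 - ma) / (1 + x) = mix m1 ma x) at_top"
    using eventually_ge_at_top[of 0] by eventually_elim (simp add: mix_eq)
  ultimately show ?thesis by (simp add: tendsto_cong)
qed

lemma mix_eq_weighted_mean_iff:
  assumes "m1 \<noteq> ma" "p + q > 0" "0 \<le> x"
  shows "(p * m1 + q * ma) / (p + q) = mix m1 ma x \<longleftrightarrow> q = x * p"
proof -
  have "(p * m1 + q * ma) / (p + q) = mix m1 ma x \<longleftrightarrow> (m1 - ma) * (x * p - q) = 0"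
    using assms unfolding mix_def by (simp add: frac_eq_eq algebra_simps)
  then show ?thesis using assms(1) by auto
qed

lemma g_fun_eq: "1 + x \<noteq> 0 \<Longrightarrow> g_fun d m1 ma x = d m1 (mix m1 ma x) + x * d ma (mix m1 ma x)"
proof -
  assume x: "1 + x \<noteq> 0"
  have x': "1 - 1 / (1 + x) = x / (1 + x)"
    using x by (simp add: field_simps)
  have "1 / (1 + x) * m1 + (1 - 1 / (1 + x)) * ma = mix m1 ma x"
    unfolding mix_def x' by (simp add: add_divide_distrib)
  moreover have "(1 + x) * (1 - 1 / (1 + x)) = x"
    using x unfolding x' by simp
  ultimately show ?thesis
    using x unfolding g_fun_def I_alpha_def by (simp add: distrib_left mult.assoc[symmetric])
qed

context nef_family
begin

lemma g_fun_decomposition: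
  "1 + x \<noteq> 0 \<Longrightarrow> kl m1 m + x * kl ma m = g_fun kl m1 ma x + (1 + x) * kl (mix m1 ma x) m"
  using kl_mixture_decomposition[where p = 1 and q = x and u = m1 and v = ma and z = m]
  by (simp add: g_fun_eq mix_def)

lemma g_fun_0 [simp]: "g_fun kl m1 ma 0 = 0"
  by (simp add: g_fun_eq)

context
  fixes m1 ma assumes m1: "m1 \<in> Means" and ma: "ma \<in> Means" and ma_less: "ma < m1"
begin

lemma mix_in_Means: "0 \<le> x \<Longrightarrow> mix m1 ma x \<in> Means"
  using Means_between[OF ma m1] mix_bounds[OF ma_less] by (meson less_imp_le)

lemma g_fun_le: "0 \<le> x \<Longrightarrow> m \<in> Means \<Longrightarrow> g_fun kl m1 ma x \<le> kl m1 m + x * kl ma m"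
  using g_fun_decomposition[of x] kl_nonneg mix_in_Means by (simp add: add_increasing2)

lemma g_fun_less:
  "0 \<le> x \<Longrightarrow> m \<in> Means \<Longrightarrow> m \<noteq> mix m1 ma x \<Longrightarrow> g_fun kl m1 ma x < kl m1 m + x * kl ma m"
  using g_fun_decomposition[of x] kl_pos mix_in_Means by (smt (verit) mult_pos_pos)

lemma g_fun_strict_mono: "strict_mono_on {0..} (g_fun kl m1 ma)"
proof (rule strict_mono_onI)
  fix x x' :: real assume "x \<in> {0..}" "x < x'"
  then have assms: "0 \<le> x" "x < x'" by auto
  let ?m = "mix m1 ma x'"
  have "g_fun kl m1 ma x < kl m1 ?m + x * kl ma ?m"
    using assms mix_strict_antimono[OF ma_less assms] by (intro g_fun_less mix_in_Means) auto
  also have "\<dots> \<le> kl m1 ?m + x' * kl ma ?m"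
    using assms kl_nonneg[OF ma mix_in_Means] by (simp add: mult_right_mono)
  also have "\<dots> = g_fun kl m1 ma x'"
    using assms by (simp add: g_fun_eq)
  finally show "g_fun kl m1 ma x < g_fun kl m1 ma x'" .
qed

lemma g_fun_nonneg: "0 \<le> x \<Longrightarrow> 0 \<le> g_fun kl m1 ma x"
  using strict_mono_on_leD[OF g_fun_strict_mono, of 0 x] by simp

lemma g_fun_less_kl: "0 \<le> x \<Longrightarrow> g_fun kl m1 ma x < kl m1 ma"
  using g_fun_less[OF _ ma] mix_bounds[OF ma_less] by fastforce

lemma continuous_on_g_fun: "continuous_on {0..} (g_fun kl m1 ma)"
proof -
  have "continuous_on {0..} (\<lambda>x. kl z (mix m1 ma x))" for z
    by (rule continuous_on_compose2[OF continuous_on_kl continuous_on_mix]) (use mix_in_Means in auto)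
  then have "continuous_on {0..} (\<lambda>x. kl m1 (mix m1 ma x) + x * kl ma (mix m1 ma x))"
    by (intro continuous_intros)
  then show ?thesis
    by (rule continuous_on_eq) (simp add: g_fun_eq)
qed

lemma g_fun_image: "0 \<le> x \<Longrightarrow> g_fun kl m1 ma ` {0..x} = {0..g_fun kl m1 ma x}"
proof -
  assume x: "0 \<le> x"
  have "g_fun kl m1 ma ` {0..x} \<subseteq> {0..g_fun kl m1 ma x}"
  proof (rule image_subsetI)
    fix t assume "t \<in> {0..x}"
    then show "g_fun kl m1 ma t \<in> {0..g_fun kl m1 ma x}"
      using strict_mono_on_leD[OF g_fun_strict_mono, of t x] g_fun_nonneg[of t] by simp
  qed
  moreover have "{0..g_fun kl m1 ma x} \<subseteq> g_fun kl m1 ma ` {0..x}"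
  proof
    fix y assume "y \<in> {0..g_fun kl m1 ma x}"
    moreover have "continuous_on {0..x} (g_fun kl m1 ma)"
      by (rule continuous_on_subset[OF continuous_on_g_fun]) auto
    ultimately obtain t where "0 \<le> t" "t \<le> x" "g_fun kl m1 ma t = y"
      using IVT'[of "g_fun kl m1 ma" 0 y x] x by auto
    then show "y \<in> g_fun kl m1 ma ` {0..x}" by auto
  qed
  ultimately show ?thesis by blast
qed

lemma kl_mix_tendsto: "((\<lambda>x. kl z (mix m1 ma x)) \<longlongrightarrow> kl z ma) at_top"
  using isCont_tendsto_compose[OF isCont_kl[OF ma] mix_tendsto] .

lemma eventually_less_g_fun:
  assumes "y < kl m1 ma"
  shows "eventually (\<lambda>x. y < g_fun kl m1 ma x) at_top"
  using order_tendstoD(1)[OF kl_mix_tendsto assms] eventually_ge_at_top[of 0]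
proof eventually_elim
  case (elim x)
  then have "0 \<le> x * kl ma (mix m1 ma x)"
    using kl_nonneg[OF ma mix_in_Means] by simp
  with elim show ?case by (simp add: g_fun_eq)
qed

lemma eventually_kl_ratio:
  assumes "C > 0"
  shows "eventually (\<lambda>x. kl ma (mix m1 ma x) < C * kl m1 (mix m1 ma x)) at_top"
proof -
  have D: "0 < C * kl m1 ma / 2" using kl_pos[OF m1 ma] ma_less assms by simp
  have "((\<lambda>x. C * kl m1 (mix m1 ma x)) \<longlongrightarrow> C * kl m1 ma) at_top"
    by (intro tendsto_mult_left kl_mix_tendsto)
  then have "eventually (\<lambda>x. C * kl m1 ma / 2 < C * kl m1 (mix m1 ma x)) at_top"
    by (rule order_tendstoD(1)) (use D in simp)
  moreover have "eventually (\<lambda>x. kl ma (mix m1 ma x) < C * kl m1 ma / 2) at_top"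
    by (rule order_tendstoD(2)[OF kl_mix_tendsto]) (use D in simp)
  ultimately show ?thesis by eventually_elim auto
qed

lemma g_fun_surj:
  assumes "0 \<le> y" "y < kl m1 ma"
  shows "\<exists>x\<ge>0. g_fun kl m1 ma x = y"
proof -
  obtain X where "0 \<le> X" "y < g_fun kl m1 ma X"
    using eventually_happens'[OF _ eventually_conj[OF eventually_ge_at_top[of 0]
        eventually_less_g_fun[OF assms(2)]]] by auto
  then have "y \<in> g_fun kl m1 ma ` {0..X}" using g_fun_image assms(1) by simp
  then show ?thesis by auto
qed

lemma minimiser_weight_ratio:
  assumes "0 \<le> p" "0 \<le> q" "0 < p + q" "0 \<le> x"
    and min: "\<forall>m\<in>Means. p * kl m1 (mix m1 ma x) + q * kl ma (mix m1 ma x) \<le> p * kl m1 m + q * kl ma m"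
  shows "q = x * p"
proof -
  define mb where "mb = (p * m1 + q * ma) / (p + q)"
  have "ma * p \<le> m1 * p" "ma * q \<le> m1 * q"
    using assms(1,2) ma_less by (simp_all add: mult_right_mono)
  then have "ma \<le> mb" "mb \<le> m1"
    using assms(3) unfolding mb_def by (simp_all add: field_simps)
  then have mb: "mb \<in> Means" using Means_between[OF ma m1] by blast
  have "(p + q) * kl mb (mix m1 ma x) \<le> 0"
    using min[rule_format, OF mb] kl_mixture_decomposition[of p q m1 "mix m1 ma x" ma] assms(3)
    unfolding mb_def by simp
  then have "kl mb (mix m1 ma x) = 0"
    using assms(3) kl_nonneg[OF mb mix_in_Means[OF assms(4)]] by (simp add: mult_le_0_iff)
  then have "mb = mix m1 ma x" using kl_eq_0_iff[OF mb mix_in_Means[OF assms(4)]] by simp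
  then show ?thesis using mix_eq_weighted_mean_iff[of m1 ma p q x] ma_less assms unfolding mb_def by simp
qed

lemma inj_on_g_fun: "inj_on (g_fun kl m1 ma) {0..}"
  using strict_mono_on_imp_inj_on[OF g_fun_strict_mono] .

lemma
  assumes "0 \<le> y" "y < kl m1 ma"
  shows x_fun_nonneg: "0 \<le> x_fun kl m1 ma y"
    and g_fun_x_fun: "g_fun kl m1 ma (x_fun kl m1 ma y) = y"
proof -
  obtain x where x: "0 \<le> x" "g_fun kl m1 ma x = y"
    using g_fun_surj[OF assms] by blast
  have "x_fun kl m1 ma y = x"
    unfolding x_fun_def using x inj_onD[OF inj_on_g_fun] by (intro the_equality) auto
  with x show "0 \<le> x_fun kl m1 ma y" "g_fun kl m1 ma (x_fun kl m1 ma y) = y"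
    by simp_all
qed

lemma x_fun_g_fun [simp]: "0 \<le> x \<Longrightarrow> x_fun kl m1 ma (g_fun kl m1 ma x) = x"
  unfolding x_fun_def using inj_onD[OF inj_on_g_fun] by (intro the_equality) auto

lemma continuous_on_x_fun: "0 \<le> x \<Longrightarrow> continuous_on {0..g_fun kl m1 ma x} (x_fun kl m1 ma)"
proof -
  assume x: "0 \<le> x"
  have "continuous_on (g_fun kl m1 ma ` {0..x}) (x_fun kl m1 ma)"
    by (rule continuous_on_inv) (auto intro: continuous_on_subset[OF continuous_on_g_fun])
  then show ?thesis using g_fun_image[OF x] by simp
qed

end

end

lemma lower_bound_le_weighted_mean:
  fixes r L :: "'a \<Rightarrow> real"
  assumes "finite I" "I \<noteq> {}" "\<forall>i\<in>I. 0 < r i" "\<forall>i\<in>I. t \<le> L i"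
    and mean: "(\<Sum>i\<in>I. r i * L i) = (\<Sum>i\<in>I. r i) * v"
  shows "t \<le> v" and "t = v \<Longrightarrow> \<forall>i\<in>I. L i = v"
proof -
  have "(\<Sum>i\<in>I. r i) * t = (\<Sum>i\<in>I. r i * t)"
    by (simp add: sum_distrib_right)
  also have "\<dots> \<le> (\<Sum>i\<in>I. r i * L i)"
  proof (rule sum_mono)
    fix i assume "i \<in> I"
    then show "r i * t \<le> r i * L i" using assms(3,4) by simp
  qed
  finally have "(\<Sum>i\<in>I. r i) * t \<le> (\<Sum>i\<in>I. r i) * v"
    unfolding mean .
  moreover have "0 < (\<Sum>i\<in>I. r i)" using assms(1-3) by (intro sum_pos) auto
  ultimately show "t \<le> v" by simp
  assume "t = v"
  have "(\<Sum>i\<in>I. r i * (L i - v)) = (\<Sum>i\<in>I. r i * L i) - (\<Sum>i\<in>I. r i) * v"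
    by (simp add: right_diff_distrib sum_subtractf sum_distrib_right)
  then have "(\<Sum>i\<in>I. r i * (L i - v)) = 0"
    using mean by simp
  moreover have nonneg: "\<forall>i\<in>I. 0 \<le> r i * (L i - v)"
  proof
    fix i assume "i \<in> I"
    then show "0 \<le> r i * (L i - v)"
      using assms(3,4) \<open>t = v\<close> by (intro mult_nonneg_nonneg) auto
  qed
  ultimately have "\<forall>i\<in>I. r i * (L i - v) = 0"
    using assms(1) by (simp add: sum_nonneg_eq_0_iff)
  then show "\<forall>i\<in>I. L i = v"
    using assms(3) by (metis eq_iff_diff_eq_0 less_irrefl mult_eq_0_iff)
qed

locale best_arm_problem = nef_family +
  fixes K :: nat and mu c :: "nat \<Rightarrow> real"
  assumes K_ge_2: "K \<ge> 2"
    and arm_means_all: "\<forall>a\<in>{1..K}. mu a \<in> Means"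
    and arm1_best_all: "\<forall>a\<in>{2..K}. mu 1 > mu a"
    and c_pos_all: "\<forall>a\<in>{1..K}. c a > 0"
begin

abbreviation "cost w l \<equiv> \<Sum>a=1..K. w a / c a * kl (mu a) (l a)"

definition pair_cost :: "(nat \<Rightarrow> real) \<Rightarrow> nat \<Rightarrow> real \<Rightarrow> real" where
  "pair_cost w a m = w 1 / c 1 * kl (mu 1) m + w a / c a * kl (mu a) m"

lemma mu_in_Means: "a \<in> {1..K} \<Longrightarrow> mu a \<in> Means"
  and c_pos: "a \<in> {1..K} \<Longrightarrow> 0 < c a"
  and mu_less_mu1: "a \<in> {2..K} \<Longrightarrow> mu a < mu 1"
  using arm_means_all c_pos_all arm1_best_all by simp_all

lemma mu1_in_Means: "mu 1 \<in> Means" and c1_pos: "0 < c 1"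
  using mu_in_Means[of 1] c_pos[of 1] K_ge_2 by simp_all

lemma sum_split_arm1: "(\<Sum>a=1..K. f a) = f 1 + (\<Sum>a=2..K. f a)"
  using K_ge_2 by (simp add: sum.atLeast_Suc_atMost numeral_2_eq_2)

lemma arm_in_Means: "a \<in> {2..K} \<Longrightarrow> mu a \<in> Means"
  using mu_in_Means by simp

lemma cost_term_nonneg:
  "a \<in> {1..K} \<Longrightarrow> 0 \<le> w a \<Longrightarrow> m \<in> Means \<Longrightarrow> 0 \<le> w a / c a * kl (mu a) m"
  using c_pos[of a] kl_nonneg[OF mu_in_Means, of a m] by simp

lemma bdd_below_cost:
  assumes "\<forall>a\<in>{1..K}. 0 \<le> w a"
  shows "bdd_below ((\<lambda>l. cost w l) ` alt_set Means K)"
  using assms cost_term_nonneg unfolding bdd_below_def alt_set_def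
  by (intro exI[of _ 0]) (auto intro: sum_nonneg)

lemma alt_set_nonempty: "alt_set Means K \<noteq> {}"
proof -
  have "mu(1 := mu 2, 2 := mu 1) \<in> alt_set Means K"
    using arm_means_all arm1_best_all K_ge_2 unfolding alt_set_def by auto
  then show ?thesis by blast
qed

lemma raised_max_in_alt_set:
  assumes v: "\<forall>b\<in>{1..K}. v b \<in> Means" and a: "a \<in> {2..K}"
    and max: "\<forall>b\<in>{1..K}. v b \<le> v a" and "0 < t" and "v a + t \<in> Means"
  shows "v(a := v a + t) \<in> alt_set Means K"
  unfolding alt_set_def
proof (intro CollectI conjI ballI bexI[OF _ a] impI)
  fix b assume b: "b \<in> {1..K}"
  then show "(v(a := v a + t)) b \<in> Means" using v \<open>v a + t \<in> Means\<close> by simp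
  assume "b \<noteq> a"
  then show "(v(a := v a + t)) b < (v(a := v a + t)) a"
    using max[rule_format, OF b] \<open>0 < t\<close> by simp
qed

text \<open>The bound passes to the closure of the alternative set: raising the largest of
  \<open>v 2, \<dots>, v K\<close> by \<open>t > 0\<close> lands in it, and the cost is continuous as \<open>t \<rightarrow> 0\<close>.\<close>

lemma objective_le_cost:
  assumes w: "\<forall>b\<in>{1..K}. 0 \<le> w b" and v: "\<forall>b\<in>{1..K}. v b \<in> Means"
    and a: "a \<in> {2..K}" and "v 1 \<le> v a"
  shows "objective kl Means K mu c w \<le> cost w v"
proof -
  have "Max (v ` {2..K}) \<in> v ` {2..K}"
    using a by (intro Max_in) auto
  then obtain a' where a': "a' \<in> {2..K}" "v a' = Max (v ` {2..K})"
    by auto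
  have below: "\<forall>b\<in>{1..K}. v b \<le> v a'"
  proof
    fix b assume "b \<in> {1..K}"
    have "v b' \<le> v a'" if "b' \<in> {2..K}" for b'
      using Max_ge[of "v ` {2..K}" "v b'"] that a'(2) by simp
    then show "v b \<le> v a'"
      using \<open>b \<in> {1..K}\<close> a \<open>v 1 \<le> v a\<close> by (cases "b = 1") force+
  qed
  define l where "l t = v(a' := v a' + t)" for t
  have shift: "((\<lambda>t. v a' + t) \<longlongrightarrow> v a') (at_right 0)"
    by (auto intro!: tendsto_eq_intros)
  have "((\<lambda>t. kl (mu b) (l t b)) \<longlongrightarrow> kl (mu b) (v b)) (at_right 0)" if "b \<in> {1..K}" for b
  proof (cases "b = a'")
    case True
    with shift show ?thesis
      unfolding l_def using isCont_tendsto_compose[OF isCont_kl[OF v[rule_format, OF that]]] by simp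
  qed (simp add: l_def)
  then have lim: "((\<lambda>t. cost w (l t)) \<longlongrightarrow> cost w v) (at_right 0)"
    by (intro tendsto_sum tendsto_mult_left) auto
  have "v a' \<in> Means" using v a'(1) by simp
  then have "eventually (\<lambda>t. v a' + t \<in> Means) (at_right 0)"
    using topological_tendstoD[OF shift open_Means] by blast
  then have "eventually (\<lambda>t. objective kl Means K mu c w \<le> cost w (l t)) (at_right 0)"
    using eventually_at_right_less[of 0]
  proof eventually_elim
    case (elim t)
    then have "l t \<in> alt_set Means K"
      unfolding l_def by (intro raised_max_in_alt_set[OF v a'(1) below]) auto
    then show ?case
      unfolding objective_def by (rule cInf_lower[OF imageI bdd_below_cost[OF w]])
  qed
  with lim show ?thesis by (intro tendsto_lowerbound) auto
qed

lemma objective_le_pair_cost: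
  assumes w: "\<forall>b\<in>{1..K}. 0 \<le> w b" and a: "a \<in> {2..K}" and m: "m \<in> Means"
  shows "objective kl Means K mu c w \<le> pair_cost w a m"
proof -
  define v where "v b = (if b = 1 \<or> b = a then m else mu b)" for b
  have "cost w v = (\<Sum>b\<in>{1,a}. w b / c b * kl (mu b) (v b))"
    by (rule sum.mono_neutral_right) (use a in \<open>auto simp: v_def\<close>)
  also have "\<dots> = pair_cost w a m"
    using a by (simp add: v_def pair_cost_def)
  finally show ?thesis
    using objective_le_cost[OF w _ a, of v] mu_in_Means m by (simp add: v_def)
qed

lemma pair_cost_le_cost:
  assumes w: "\<forall>b\<in>{1..K}. 0 \<le> w b" and l: "l \<in> alt_set Means K"
  shows "\<exists>a\<in>{2..K}. \<exists>m\<in>Means. pair_cost w a m \<le> cost w l"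
proof -
  obtain a where a: "a \<in> {2..K}" "\<forall>b\<in>{1..K}. b \<noteq> a \<longrightarrow> l b < l a"
    and lM: "\<forall>b\<in>{1..K}. l b \<in> Means"
    using l unfolding alt_set_def by auto
  obtain m where m: "m \<in> Means" "kl (mu 1) m \<le> kl (mu 1) (l 1)" "kl (mu a) m \<le> kl (mu a) (l a)"
  proof -
    have "1 \<in> {1..K}" "a \<in> {1..K}" "1 \<noteq> a" using a(1) by auto
    then have "l 1 \<in> Means" "l a \<in> Means" "l 1 < l a" using lM a(2) by auto
    then show ?thesis
      using common_mean_kl_le[OF mu1_in_Means arm_in_Means[OF a(1)]] mu_less_mu1[OF a(1)] that
      by (meson less_imp_le)
  qed
  have "0 \<le> w 1 / c 1" "0 \<le> w a / c a"
    using w c_pos[of 1] c_pos[of a] a K_ge_2 by simp_all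
  then have "pair_cost w a m \<le> w 1 / c 1 * kl (mu 1) (l 1) + w a / c a * kl (mu a) (l a)"
    unfolding pair_cost_def using m by (intro add_mono mult_left_mono) auto
  also have "\<dots> = (\<Sum>b\<in>{1,a}. w b / c b * kl (mu b) (l b))"
    using a by simp
  also have "\<dots> \<le> cost w l"
  proof (rule sum_mono2)
    fix b assume "b \<in> {1..K} - {1, a}"
    then show "0 \<le> w b / c b * kl (mu b) (l b)"
      using w lM by (intro cost_term_nonneg) auto
  qed (use a in auto)
  finally show ?thesis using a m by blast
qed

lemma le_objective:
  assumes w: "\<forall>b\<in>{1..K}. 0 \<le> w b"
    and le: "\<And>a m. a \<in> {2..K} \<Longrightarrow> m \<in> Means \<Longrightarrow> t \<le> pair_cost w a m"
  shows "t \<le> objective kl Means K mu c w"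
  unfolding objective_def using alt_set_nonempty pair_cost_le_cost[OF w] le
  by (intro cInf_greatest) force+

definition normaliser :: "real \<Rightarrow> real" where
  "normaliser y = (\<Sum>b=1..K. c b * x_arm kl mu b y)"

definition arm_mix :: "real \<Rightarrow> nat \<Rightarrow> real" where
  "arm_mix y a = mix (mu 1) (mu a) (x_arm kl mu a y)"

(* Stated for Suc 0, the simp normal form of the natural number 1. *)
lemma x_arm_1 [simp]: "x_arm kl mu (Suc 0) y = 1"
  by (simp add: x_arm_def)

lemma opt_weights_eq: "opt_weights kl K mu c y a = c a * x_arm kl mu a y / normaliser y"
  by (simp add: opt_weights_def normaliser_def)

lemma F_fun_arm_mix:
  "F_fun kl K mu c y = (\<Sum>a=2..K. c a * kl (mu 1) (arm_mix y a) / (c 1 * kl (mu a) (arm_mix y a)))"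
  unfolding F_fun_def arm_mix_def mix_def x_arm_def Let_def by (rule sum.cong) auto

lemma F_fun_0: "F_fun kl K mu c 0 = 0"
proof -
  have "arm_mix 0 a = mu 1" if "a \<in> {2..K}" for a
    using that x_fun_g_fun[OF mu1_in_Means arm_in_Means[OF that] mu_less_mu1[OF that], of 0]
    by (simp add: arm_mix_def x_arm_def)
  then show ?thesis by (simp add: F_fun_arm_mix)
qed

context
  fixes y assumes y_nonneg: "0 \<le> y" and y_less: "\<forall>a\<in>{2..K}. y < kl (mu 1) (mu a)"
begin

lemma x_arm_nonneg: "a \<in> {2..K} \<Longrightarrow> 0 \<le> x_arm kl mu a y"
  and g_fun_x_arm: "a \<in> {2..K} \<Longrightarrow> g_fun kl (mu 1) (mu a) (x_arm kl mu a y) = y"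
  using x_fun_nonneg[OF mu1_in_Means arm_in_Means mu_less_mu1 y_nonneg, of a]
    g_fun_x_fun[OF mu1_in_Means arm_in_Means mu_less_mu1 y_nonneg, of a] y_less
  by (simp_all add: x_arm_def)

lemma arm_mix_in_Means: "a \<in> {2..K} \<Longrightarrow> arm_mix y a \<in> Means"
  and mu_less_arm_mix: "a \<in> {2..K} \<Longrightarrow> mu a < arm_mix y a"
  using mix_in_Means[OF mu1_in_Means arm_in_Means mu_less_mu1 x_arm_nonneg]
    mix_bounds(1)[OF mu_less_mu1 x_arm_nonneg]
  by (simp_all add: arm_mix_def)

lemma kl_arm_mix_pos: "a \<in> {2..K} \<Longrightarrow> 0 < kl (mu a) (arm_mix y a)"
  using kl_pos[OF arm_in_Means arm_mix_in_Means] mu_less_arm_mix by force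

lemma level_at_arm_mix:
  assumes a: "a \<in> {2..K}"
  shows "kl (mu 1) (arm_mix y a) + x_arm kl mu a y * kl (mu a) (arm_mix y a) = y"
  using g_fun_eq[of "x_arm kl mu a y" kl "mu 1" "mu a"] g_fun_x_arm[OF a] x_arm_nonneg[OF a]
  by (simp add: arm_mix_def)

lemma normaliser_pos: "0 < normaliser y"
proof -
  have "0 \<le> (\<Sum>b=2..K. c b * x_arm kl mu b y)"
  proof (rule sum_nonneg)
    fix b assume "b \<in> {2..K}"
    then show "0 \<le> c b * x_arm kl mu b y"
      using c_pos[of b] x_arm_nonneg[of b] by simp
  qed
  then show ?thesis
    using c1_pos unfolding normaliser_def sum_split_arm1 by simp
qed

lemma opt_weights_in_simplex: "opt_weights kl K mu c y \<in> prob_simplex K"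
proof -
  have "0 \<le> opt_weights kl K mu c y a" if "a \<in> {1..K}" for a
    using that c_pos[OF that] x_arm_nonneg[of a] normaliser_pos
    by (cases "a = 1") (simp_all add: opt_weights_eq)
  moreover have "(\<Sum>a=1..K. opt_weights kl K mu c y a) = 1"
    using normaliser_pos
    by (simp add: opt_weights_eq sum_divide_distrib[symmetric] normaliser_def)
  ultimately show ?thesis unfolding prob_simplex_def by simp
qed

lemma pair_cost_opt_weights:
  "a \<in> {2..K} \<Longrightarrow> pair_cost (opt_weights kl K mu c y) a m
     = (kl (mu 1) m + x_arm kl mu a y * kl (mu a) m) / normaliser y"
  using c1_pos c_pos[of a]
  by (simp add: pair_cost_def opt_weights_eq add_divide_distrib)

lemma objective_opt_weights_ge: "y / normaliser y \<le> objective kl Means K mu c (opt_weights kl K mu c y)"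
proof (rule le_objective)
  show "\<forall>b\<in>{1..K}. 0 \<le> opt_weights kl K mu c y b"
    using opt_weights_in_simplex unfolding prob_simplex_def by simp
  fix a m assume a: "a \<in> {2..K}" and m: "m \<in> Means"
  have "y \<le> kl (mu 1) m + x_arm kl mu a y * kl (mu a) m"
    using g_fun_le[OF mu1_in_Means arm_in_Means[OF a] mu_less_mu1[OF a] x_arm_nonneg[OF a] m]
      g_fun_x_arm[OF a] by simp
  then show "y / normaliser y \<le> pair_cost (opt_weights kl K mu c y) a m"
    using normaliser_pos by (simp add: pair_cost_opt_weights[OF a] divide_right_mono)
qed

context
  assumes F_y: "F_fun kl K mu c y = 1"
begin

lemma level_pos: "0 < y"
  using F_y F_fun_0 y_nonneg by (cases "y = 0") auto

lemma sum_arm_ratios: "(\<Sum>a=2..K. c a * kl (mu 1) (arm_mix y a) / kl (mu a) (arm_mix y a)) = c 1"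
proof -
  have "(\<Sum>a=2..K. c a * kl (mu 1) (arm_mix y a) / kl (mu a) (arm_mix y a)) = c 1 * F_fun kl K mu c y"
    unfolding F_fun_arm_mix sum_distrib_left by (rule sum.cong) (use c1_pos in simp_all)
  then show ?thesis using F_y by simp
qed

lemma weighted_pair_costs:
  assumes w: "w \<in> prob_simplex K"
  shows "(\<Sum>a=2..K. c a / kl (mu a) (arm_mix y a) * pair_cost w a (arm_mix y a)) = 1"
proof -
  have "(\<Sum>a=2..K. c a / kl (mu a) (arm_mix y a) * pair_cost w a (arm_mix y a))
      = (\<Sum>a=2..K. w 1 / c 1 * (c a * kl (mu 1) (arm_mix y a) / kl (mu a) (arm_mix y a)) + w a)"
  proof (rule sum.cong)
    fix a assume a: "a \<in> {2..K}"
    then show "c a / kl (mu a) (arm_mix y a) * pair_cost w a (arm_mix y a)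
        = w 1 / c 1 * (c a * kl (mu 1) (arm_mix y a) / kl (mu a) (arm_mix y a)) + w a"
      using c_pos[of a] kl_arm_mix_pos[OF a] by (simp add: pair_cost_def field_simps)
  qed simp
  also have "\<dots> = w 1 / c 1 * (\<Sum>a=2..K. c a * kl (mu 1) (arm_mix y a) / kl (mu a) (arm_mix y a))
      + (\<Sum>a=2..K. w a)"
    by (simp add: sum.distrib sum_distrib_left)
  also have "\<dots> = (\<Sum>a=1..K. w a)"
    unfolding sum_split_arm1 sum_arm_ratios using c1_pos by simp
  also have "\<dots> = 1"
    using w unfolding prob_simplex_def by simp
  finally show ?thesis .
qed

lemma objective_le_level:
  assumes w: "w \<in> prob_simplex K"
  shows "objective kl Means K mu c w \<le> y / normaliser y"
    and "objective kl Means K mu c w = y / normaliser y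
           \<Longrightarrow> \<forall>a\<in>{2..K}. pair_cost w a (arm_mix y a) = y / normaliser y"
proof -
  let ?r = "\<lambda>a. c a / kl (mu a) (arm_mix y a)"
  have opt: "pair_cost (opt_weights kl K mu c y) a (arm_mix y a) = y / normaliser y"
    if "a \<in> {2..K}" for a
    using pair_cost_opt_weights[OF that] level_at_arm_mix[OF that] by simp
  have "(\<Sum>a=2..K. ?r a) * (y / normaliser y)
      = (\<Sum>a=2..K. ?r a * pair_cost (opt_weights kl K mu c y) a (arm_mix y a))"
    unfolding sum_distrib_right by (rule sum.cong) (simp_all add: opt)
  also have "\<dots> = 1"
    by (rule weighted_pair_costs[OF opt_weights_in_simplex])
  finally have opt_mean: "(\<Sum>a=2..K. ?r a) * (y / normaliser y) = 1" .
  have mean: "(\<Sum>a=2..K. ?r a * pair_cost w a (arm_mix y a)) = (\<Sum>a=2..K. ?r a) * (y / normaliser y)"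
    by (simp only: opt_mean weighted_pair_costs[OF w])
  have w_nonneg: "\<forall>b\<in>{1..K}. 0 \<le> w b"
    using w unfolding prob_simplex_def by simp
  have "\<forall>a\<in>{2..K}. 0 < ?r a"
    using c_pos kl_arm_mix_pos by simp
  moreover have "\<forall>a\<in>{2..K}. objective kl Means K mu c w \<le> pair_cost w a (arm_mix y a)"
    using objective_le_pair_cost[OF w_nonneg] arm_mix_in_Means by simp
  moreover have "finite {2..K}" "{2..K} \<noteq> {}" using K_ge_2 by simp_all
  ultimately show "objective kl Means K mu c w \<le> y / normaliser y"
    and "objective kl Means K mu c w = y / normaliser y
           \<Longrightarrow> \<forall>a\<in>{2..K}. pair_cost w a (arm_mix y a) = y / normaliser y"
    using lower_bound_le_weighted_mean[OF _ _ _ _ mean] by blast+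
qed

lemma objective_opt_weights: "objective kl Means K mu c (opt_weights kl K mu c y) = y / normaliser y"
  using objective_le_level(1)[OF opt_weights_in_simplex] objective_opt_weights_ge by simp

lemma weights_of_optimal_pair_cost:
  assumes w: "w \<in> prob_simplex K" and a: "a \<in> {2..K}"
    and eq: "pair_cost w a (arm_mix y a) = y / normaliser y"
    and min: "\<forall>m\<in>Means. y / normaliser y \<le> pair_cost w a m"
  shows "w 1 / c 1 = 1 / normaliser y" "w a / c a = x_arm kl mu a y / normaliser y"
proof -
  define p q where "p = w 1 / c 1" and "q = w a / c a"
  have pq: "0 \<le> p" "0 \<le> q"
    using w a c1_pos c_pos[of a] K_ge_2 unfolding prob_simplex_def p_def q_def by auto
  have cost: "pair_cost w a m = p * kl (mu 1) m + q * kl (mu a) m" for m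
    by (simp add: pair_cost_def p_def q_def)
  have "0 < p + q"
  proof (rule ccontr)
    assume "\<not> 0 < p + q"
    then have "p = 0" "q = 0" using pq by linarith+
    then have "pair_cost w a (arm_mix y a) = 0" by (simp add: cost)
    then show False using eq level_pos normaliser_pos by simp
  qed
  moreover have "\<forall>m\<in>Means. p * kl (mu 1) (arm_mix y a) + q * kl (mu a) (arm_mix y a)
                             \<le> p * kl (mu 1) m + q * kl (mu a) m"
    using eq min by (simp add: cost)
  ultimately have q: "q = x_arm kl mu a y * p"
    using minimiser_weight_ratio[OF mu1_in_Means arm_in_Means[OF a] mu_less_mu1[OF a] pq]
      x_arm_nonneg[OF a] by (simp add: arm_mix_def)
  have "pair_cost w a (arm_mix y a)
      = p * (kl (mu 1) (arm_mix y a) + x_arm kl mu a y * kl (mu a) (arm_mix y a))"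
    by (simp add: cost q algebra_simps)
  then have "p * y = y / normaliser y"
    using eq level_at_arm_mix[OF a] by simp
  then have "p = 1 / normaliser y"
    using level_pos normaliser_pos by (simp add: field_simps)
  then show "w 1 / c 1 = 1 / normaliser y" "w a / c a = x_arm kl mu a y / normaliser y"
    using q unfolding p_def q_def by simp_all
qed

lemma optimal_weights_unique:
  assumes w: "w \<in> prob_simplex K"
    and opt: "objective kl Means K mu c w = objective kl Means K mu c (opt_weights kl K mu c y)"
    and a: "a \<in> {1..K}"
  shows "w a = opt_weights kl K mu c y a"
proof -
  have w_nonneg: "\<forall>b\<in>{1..K}. 0 \<le> w b"
    using w unfolding prob_simplex_def by simp
  have obj: "objective kl Means K mu c w = y / normaliser y"
    using opt objective_opt_weights by simp
  have weights: "w 1 / c 1 = 1 / normaliser y" "w b / c b = x_arm kl mu b y / normaliser y"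
    if b: "b \<in> {2..K}" for b
  proof -
    have "pair_cost w b (arm_mix y b) = y / normaliser y"
      using objective_le_level(2)[OF w obj] b by blast
    moreover have "\<forall>m\<in>Means. y / normaliser y \<le> pair_cost w b m"
      using objective_le_pair_cost[OF w_nonneg b] obj by simp
    ultimately show "w 1 / c 1 = 1 / normaliser y" "w b / c b = x_arm kl mu b y / normaliser y"
      using weights_of_optimal_pair_cost[OF w b] by blast+
  qed
  show ?thesis
  proof (cases "a = 1")
    case True
    have "(2::nat) \<in> {2..K}" using K_ge_2 by simp
    with True show ?thesis
      using weights(1)[of 2] c1_pos by (simp add: opt_weights_eq field_simps)
  next
    case False
    then have "a \<in> {2..K}" using a by simp
    then show ?thesis
      using weights(2)[of a] c_pos[OF a] by (simp add: opt_weights_eq field_simps)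
  qed
qed

end

end

lemma continuous_on_F_fun:
  assumes z: "0 \<le> z" "\<forall>a\<in>{2..K}. z < kl (mu 1) (mu a)"
  shows "continuous_on {0..z} (F_fun kl K mu c)"
proof -
  have range: "0 \<le> y" "\<forall>a\<in>{2..K}. y < kl (mu 1) (mu a)" if "y \<in> {0..z}" for y
    using that z by auto
  have kl_cont: "continuous_on {0..z} (\<lambda>y. kl m (arm_mix y a))" if a: "a \<in> {2..K}" for a m
  proof -
    have "continuous_on {0..z} (x_fun kl (mu 1) (mu a))"
      using continuous_on_x_fun[OF mu1_in_Means arm_in_Means[OF a] mu_less_mu1[OF a]
          x_arm_nonneg[OF z a]] g_fun_x_arm[OF z a] a
      by (simp add: x_arm_def)
    moreover have "x_fun kl (mu 1) (mu a) ` {0..z} \<subseteq> {0..}"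
      using x_arm_nonneg[OF range a] a by (auto simp: x_arm_def)
    ultimately have "continuous_on {0..z} (\<lambda>y. arm_mix y a)"
      unfolding arm_mix_def x_arm_def using a
      by (simp add: continuous_on_compose2[OF continuous_on_mix])
    moreover have "(\<lambda>y. arm_mix y a) ` {0..z} \<subseteq> Means"
      using arm_mix_in_Means[OF range a] by auto
    ultimately show ?thesis
      by (rule continuous_on_compose2[OF continuous_on_kl])
  qed
  have nonzero: "\<forall>y\<in>{0..z}. c 1 * kl (mu a) (arm_mix y a) \<noteq> 0" if "a \<in> {2..K}" for a
  proof
    fix y assume "y \<in> {0..z}"
    then show "c 1 * kl (mu a) (arm_mix y a) \<noteq> 0"
      using c1_pos kl_arm_mix_pos[OF range[OF \<open>y \<in> {0..z}\<close>] that] by simp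
  qed
  show ?thesis
    unfolding F_fun_arm_mix[abs_def]
    by (intro continuous_on_sum continuous_on_divide continuous_on_mult_left kl_cont nonzero)
qed

text \<open>Take the arm a0 with the smallest divergence d(mu_1, mu_a0): every level
  g_a0(X) is then admissible for all arms, and for large X the a0-term of F alone exceeds 1.\<close>

lemma exists_level: "\<exists>y. 0 \<le> y \<and> (\<forall>a\<in>{2..K}. y < kl (mu 1) (mu a)) \<and> F_fun kl K mu c y = 1"
proof -
  obtain a0 where a0: "a0 \<in> {2..K}" "\<forall>a\<in>{2..K}. kl (mu 1) (mu a0) \<le> kl (mu 1) (mu a)"
    using Min_in[of "(\<lambda>a. kl (mu 1) (mu a)) ` {2..K}"] Min_le[of "(\<lambda>a. kl (mu 1) (mu a)) ` {2..K}"]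
      K_ge_2 by fastforce
  note arm = mu1_in_Means arm_in_Means[OF a0(1)] mu_less_mu1[OF a0(1)]
  have C: "0 < c a0 / c 1" using c_pos[of a0] c1_pos a0 by simp
  obtain X where X: "0 \<le> X"
    "kl (mu a0) (mix (mu 1) (mu a0) X) < c a0 / c 1 * kl (mu 1) (mix (mu 1) (mu a0) X)"
    using eventually_happens'[OF _ eventually_conj[OF eventually_ge_at_top[of 0]
        eventually_kl_ratio[OF arm C]]] by auto
  define z where "z = g_fun kl (mu 1) (mu a0) X"
  have z: "0 \<le> z" "\<forall>a\<in>{2..K}. z < kl (mu 1) (mu a)"
    using g_fun_nonneg[OF arm X(1)] g_fun_less_kl[OF arm X(1)] a0(2) unfolding z_def by force+
  have mix_z: "arm_mix z a0 = mix (mu 1) (mu a0) X"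
    using x_fun_g_fun[OF arm X(1)] a0(1) by (simp add: arm_mix_def x_arm_def z_def)
  have "1 \<le> c a0 * kl (mu 1) (arm_mix z a0) / (c 1 * kl (mu a0) (arm_mix z a0))"
    using X(2) c1_pos kl_arm_mix_pos[OF z a0(1)] by (simp add: mix_z field_simps)
  also have "\<dots> \<le> F_fun kl K mu c z"
    unfolding F_fun_arm_mix
  proof (rule member_le_sum[OF a0(1)])
    fix a assume "a \<in> {2..K} - {a0}"
    then have a: "a \<in> {2..K}" by simp
    show "0 \<le> c a * kl (mu 1) (arm_mix z a) / (c 1 * kl (mu a) (arm_mix z a))"
      using c_pos[of a] c1_pos a kl_nonneg[OF mu1_in_Means arm_mix_in_Means[OF z a]]
        kl_arm_mix_pos[OF z a] by simp
  qed simp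
  finally have "1 \<le> F_fun kl K mu c z" .
  then obtain y where "0 \<le> y" "y \<le> z" "F_fun kl K mu c y = 1"
    using IVT'[of "F_fun kl K mu c" 0 1 z] F_fun_0 z(1) continuous_on_F_fun[OF z] by auto
  with z show ?thesis by force
qed

lemma level_unique:
  assumes y: "0 \<le> y" "\<forall>a\<in>{2..K}. y < kl (mu 1) (mu a)" "F_fun kl K mu c y = 1"
    and y': "0 \<le> y'" "\<forall>a\<in>{2..K}. y' < kl (mu 1) (mu a)" "F_fun kl K mu c y' = 1"
  shows "y' = y"
proof -
  have two: "(2::nat) \<in> {2..K}" and one: "(1::nat) \<in> {1..K}" and "(2::nat) \<in> {1..K}"
    using K_ge_2 by simp_all
  have "objective kl Means K mu c (opt_weights kl K mu c y') = objective kl Means K mu c (opt_weights kl K mu c y)"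
    using objective_opt_weights[OF y] objective_opt_weights[OF y']
      objective_le_level(1)[OF y opt_weights_in_simplex[OF y'(1,2)]]
      objective_le_level(1)[OF y' opt_weights_in_simplex[OF y(1,2)]] by simp
  then have same: "opt_weights kl K mu c y' a = opt_weights kl K mu c y a" if "a \<in> {1..K}" for a
    using optimal_weights_unique[OF y opt_weights_in_simplex[OF y'(1,2)] _ that] by simp
  have "normaliser y' = normaliser y"
    using same[OF one] c1_pos normaliser_pos[OF y(1,2)] normaliser_pos[OF y'(1,2)]
    by (simp add: opt_weights_eq)
  then have "x_arm kl mu 2 y' = x_arm kl mu 2 y"
    using same[OF \<open>2 \<in> {1..K}\<close>] c_pos[OF \<open>2 \<in> {1..K}\<close>] normaliser_pos[OF y(1,2)]
    by (simp add: opt_weights_eq)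
  then show ?thesis
    using g_fun_x_arm[OF y(1,2) two] g_fun_x_arm[OF y'(1,2) two] by simp
qed

end

theorem theorem4:
  fixes Theta :: "real set" and b b' :: "real \<Rightarrow> real" and K :: nat
    and \<mu> c :: "nat \<Rightarrow> real"
  defines "d \<equiv> nef_kl Theta b b'"
  defines "M \<equiv> b' ` Theta"
  assumes nef: "nef_cumulant Theta b b'"
    and K2: "K \<ge> 2"
    and means: "\<forall>a\<in>{1..K}. \<mu> a \<in> M"
    and best: "\<forall>a\<in>{2..K}. \<mu> 1 > \<mu> a"
    and cpos: "\<forall>a\<in>{1..K}. c a > 0"
  shows "\<exists>ystar.
           (0 \<le> ystar \<and> (\<forall>a\<in>{2..K}. ystar < d (\<mu> 1) (\<mu> a)) \<and> F_fun d K \<mu> c ystar = 1) \<and>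
           (\<forall>y. 0 \<le> y \<and> (\<forall>a\<in>{2..K}. y < d (\<mu> 1) (\<mu> a)) \<and> F_fun d K \<mu> c y = 1 \<longrightarrow> y = ystar) \<and>
           opt_weights d K \<mu> c ystar \<in> prob_simplex K \<and>
           (\<forall>w\<in>prob_simplex K. objective d M K \<mu> c w \<le> objective d M K \<mu> c (opt_weights d K \<mu> c ystar)) \<and>
           (\<forall>w\<in>prob_simplex K. objective d M K \<mu> c w = objective d M K \<mu> c (opt_weights d K \<mu> c ystar)
               \<longrightarrow> (\<forall>a\<in>{1..K}. w a = opt_weights d K \<mu> c ystar a))"
proof -
  interpret best_arm_problem Theta b b' K \<mu> c
    using nef K2 means best cpos unfolding M_def by unfold_locales
  obtain y where y: "0 \<le> y" "\<forall>a\<in>{2..K}. y < kl (\<mu> 1) (\<mu> a)" "F_fun kl K \<mu> c y = 1"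
    using exists_level by blast
  show ?thesis
    unfolding d_def M_def
  proof (intro exI[of _ y] conjI allI impI ballI)
    show "y' = y" if "0 \<le> y' \<and> (\<forall>a\<in>{2..K}. y' < kl (\<mu> 1) (\<mu> a)) \<and> F_fun kl K \<mu> c y' = 1" for y'
      using level_unique[OF y] that by blast
    show "opt_weights kl K \<mu> c y \<in> prob_simplex K"
      using opt_weights_in_simplex[OF y(1,2)] .
    show "objective kl Means K \<mu> c w \<le> objective kl Means K \<mu> c (opt_weights kl K \<mu> c y)"
      if "w \<in> prob_simplex K" for w
      using objective_le_level(1)[OF y that] objective_opt_weights[OF y] by simp
    show "w a = opt_weights kl K \<mu> c y a"
      if "w \<in> prob_simplex K" "objective kl Means K \<mu> c w = objective kl Means K \<mu> c (opt_weights kl K \<mu> c y)"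
        "a \<in> {1..K}" for w a
      using optimal_weights_unique[OF y that] .
  qed (use y in auto)
qed

end
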